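(* Let $R = \mathbb{Z} \times \mathbb{Z}$ with coordinatewise addition and multiplication $(a,b)\cdot(c,d) = (ac, ad+bc)$, and consider the template $(\mathbb{Z}^+ \times \mathbb{N}, \mathbb{N}^2, \mathbb{N}^2)$ in $R$. Suppose $a_1, a_2 \in \mathbb{Z}^+$ are coprime, $b \in \mathbb{N}$, $\alpha_1 = (a_1, 0)$ and $\alpha_2 = (a_2, b)$. Then \[ \mathrm{Frob}(\alpha_1, \alpha_2) = \left(\chi(a_1,a_2),\ \chi(a_1,a_2) + b(a_1 - 1)\right) + \mathbb{N}^2. \]
   Context: $\mathbb{N}$ denotes the nonnegative integers, $\mathbb{Z}^+ = \mathbb{N}\setminus\{0\}$. For coprime positive integers $a_1,a_2$, $\chi(a_1,a_2)$ denotes the least $w \in \mathbb{N}$ such that $w + \mathbb{N} \subseteq \{\lambda_1 a_1 + \lambda_2 a_2 : \lambda_1,\lambda_2 \in \mathbb{N}\}$; it equals $(a_1-1)(a_2-1)$. For the template above, $MN(\alpha_1, \alpha_2) = \{\alpha_1\lambda_1 + \alpha_2\lambda_2 : \lambda_1,\lambda_2 \in \mathbb{N}^2\} = \{(a_1c_1 + a_2c_2,\ a_1d_1 + a_2d_2 + bc_2) : c_1,c_2,d_1,d_2 \in \mathbb{N}\}$, and $\mathrm{Frob}(\alpha_1, \alpha_2) = \{w \in R : w + \mathbb{N}^2 \subseteq MN(\alpha_1, \alpha_2)\}$. *)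

theory Defs
  imports Main
begin

definition Rmult :: "int \<times> int \<Rightarrow> int \<times> int \<Rightarrow> int \<times> int" where
  "Rmult x y = (fst x * fst y, fst x * snd y + snd x * fst y)"

definition Radd :: "int \<times> int \<Rightarrow> int \<times> int \<Rightarrow> int \<times> int" where
  "Radd x y = (fst x + fst y, snd x + snd y)"

definition Nsq :: "(int \<times> int) set" where
  "Nsq = {(c, d). c \<ge> 0 \<and> d \<ge> 0}"

definition MN :: "int \<times> int \<Rightarrow> int \<times> int \<Rightarrow> (int \<times> int) set" where
  "MN \<alpha>1 \<alpha>2 = {Radd (Rmult \<alpha>1 m1) (Rmult \<alpha>2 m2) | m1 m2. m1 \<in> Nsq \<and> m2 \<in> Nsq}"

definition Frob :: "int \<times> int \<Rightarrow> int \<times> int \<Rightarrow> (int \<times> int) set" where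
  "Frob \<alpha>1 \<alpha>2 = {w. (\<lambda>v. Radd w v) ` Nsq \<subseteq> MN \<alpha>1 \<alpha>2}"

definition chi :: "nat \<Rightarrow> nat \<Rightarrow> nat" where
  "chi a1 a2 = (LEAST w. \<forall>n. \<exists>l1 l2. w + n = l1 * a1 + l2 * a2)"

end

theory Submission
  imports Defs
begin

text \<open>Let S be the numerical semigroup generated by a1, a2 and B = b(a1 - 1).
  The points of MN(alpha1, alpha2) are (c1 a1 + c2 a2, d1 a1 + d2 a2 + b c2). Every element of S
  has a representation with c2 \<le> a1 - 1, so every second coordinate \<ge> chi + B occurs above
  every element of S. Conversely, every representation of x = a2(a1 - 1) + a1 u has
  c2 \<equiv> -1 mod a1 by coprimality, so each second coordinate y above x satisfies y - B \<in> S;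
  a point w of Frob therefore needs w2 - B + N \<subseteq> S, i.e. w2 \<ge> chi + B.\<close>

definition generated_semigroup :: "nat \<Rightarrow> nat \<Rightarrow> nat set" where
  "generated_semigroup a1 a2 = {l1 * a1 + l2 * a2 | l1 l2. True}"

lemma chi_eq_Least:
  "chi a1 a2 = (LEAST w. \<forall>n. w + n \<in> generated_semigroup a1 a2)"
  by (simp add: chi_def generated_semigroup_def eq_commute)

lemma mem_generated_semigroup_if_ge:
  fixes a1 a2 s t m :: nat
  assumes bezout: "a1 * s = a2 * t + 1" and "a2 > 0" and "a2 * a2 * t \<le> m"
  shows "m \<in> generated_semigroup a1 a2"
proof -
  define q r where "q = m div a2" and "r = m mod a2"
  have m: "m = q * a2 + r" by (simp add: q_def r_def)
  have "r < a2" using \<open>a2 > 0\<close> by (simp add: r_def)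
  have "a2 * t \<le> q"
    unfolding q_def using assms(2,3)
    by (metis div_le_mono mult.assoc mult.commute nonzero_mult_div_cancel_left not_gr0)
  then have "r * t \<le> q" using \<open>r < a2\<close> by (meson le_trans less_imp_le mult_le_mono1)
  \<comment> \<open>the remainder r is absorbed via r = r s a1 - r t a2, which needs r t \<le> q\<close>
  have "r * s * a1 = r * t * a2 + r"
    using bezout by (metis add.commute distrib_left mult.assoc mult.commute mult.right_neutral)
  with m \<open>r * t \<le> q\<close> have "m = (r * s) * a1 + (q - r * t) * a2"
    by (simp add: diff_mult_distrib)
  then show ?thesis unfolding generated_semigroup_def by blast
qed

lemma conductor_exists:
  fixes a1 a2 :: nat
  assumes "a1 > 0" and "a2 > 0" and "coprime a1 a2"
  shows "\<exists>w. \<forall>n. w + n \<in> generated_semigroup a1 a2"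
proof -
  obtain s t where "a1 * s = a2 * t + gcd a1 a2" using bezout_nat[of a1 a2] assms(1) by auto
  with assms(3) have "a1 * s = a2 * t + 1" by simp
  then show ?thesis using mem_generated_semigroup_if_ge assms(2) le_add1 by blast
qed

lemma chi_add_mem:
  assumes "a1 > 0" and "a2 > 0" and "coprime a1 a2"
  shows "chi a1 a2 + n \<in> generated_semigroup a1 a2"
  using LeastI_ex[OF conductor_exists[OF assms]] by (simp add: chi_eq_Least)

lemma chi_le:
  assumes "\<And>n. w + n \<in> generated_semigroup a1 a2"
  shows "chi a1 a2 \<le> w"
  unfolding chi_eq_Least using assms by (blast intro: Least_le)

lemma int_chi_le:
  assumes "\<And>n. 0 \<le> z + int n \<and> nat (z + int n) \<in> generated_semigroup a1 a2"
  shows "int (chi a1 a2) \<le> z"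
proof -
  have "0 \<le> z" using assms[of 0] by simp
  have "nat z + n \<in> generated_semigroup a1 a2" for n
    using assms[of n] \<open>0 \<le> z\<close> by (simp add: nat_add_distrib)
  then have "chi a1 a2 \<le> nat z" by (rule chi_le)
  with \<open>0 \<le> z\<close> show ?thesis by linarith
qed

lemma generated_semigroup_small_coeff:
  assumes "a1 > 0" and "x \<in> generated_semigroup a1 a2"
  obtains c1 c2 where "x = c1 * a1 + c2 * a2" and "c2 < a1"
proof -
  obtain l1 l2 where x: "x = l1 * a1 + l2 * a2"
    using assms(2) by (auto simp: generated_semigroup_def)
  have "l2 = (l2 div a1) * a1 + l2 mod a1" by simp
  then have "x = (l1 + a2 * (l2 div a1)) * a1 + (l2 mod a1) * a2"
    unfolding x by (metis add.assoc distrib_right mult.assoc mult.commute)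
  moreover have "l2 mod a1 < a1" using assms(1) by simp
  ultimately show ?thesis using that by blast
qed

lemma generated_semigroup_forced_coeff:
  fixes a1 a2 c1 c2 u :: nat
  assumes "a1 > 0" and "coprime a1 a2" and "c1 * a1 + c2 * a2 = a2 * (a1 - 1) + a1 * u"
  obtains j where "c2 = (a1 - 1) + a1 * j"
proof -
  have "c1 * a1 + (c2 + 1) * a2 = a1 * (a2 + u)"
    using assms(1,3) by (cases a1) (simp_all add: algebra_simps)
  then have "a1 dvd (c2 + 1) * a2" by (metis dvd_add_right_iff dvd_triv_left dvd_triv_right)
  with assms(2) have "a1 dvd c2 + 1" using coprime_dvd_mult_left_iff by blast
  then obtain k where k: "c2 + 1 = a1 * k" by blast
  then obtain j where "k = Suc j" by (cases k) auto
  with k assms(1) have "c2 = (a1 - 1) + a1 * j" by (cases a1) simp_all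
  then show ?thesis by (rule that)
qed

lemma mem_MN_iff:
  "(x, y) \<in> MN (int a1, 0) (int a2, int b) \<longleftrightarrow>
    (\<exists>c1 c2 d1 d2 :: nat. x = int (c1 * a1 + c2 * a2) \<and> y = int (d1 * a1 + d2 * a2 + b * c2))"
proof
  assume "(x, y) \<in> MN (int a1, 0) (int a2, int b)"
  then obtain c1 d1 c2 d2 where nonneg: "c1 \<ge> 0" "d1 \<ge> 0" "c2 \<ge> 0" "d2 \<ge> 0"
    and "(x, y) = Radd (Rmult (int a1, 0) (c1, d1)) (Rmult (int a2, int b) (c2, d2))"
    unfolding MN_def Nsq_def by auto
  then have "x = int a1 * c1 + int a2 * c2" "y = int a1 * d1 + int a2 * d2 + int b * c2"
    by (auto simp: Radd_def Rmult_def)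
  with nonneg show "\<exists>c1 c2 d1 d2 :: nat.
      x = int (c1 * a1 + c2 * a2) \<and> y = int (d1 * a1 + d2 * a2 + b * c2)"
    by (intro exI[of _ "nat c1"] exI[of _ "nat c2"] exI[of _ "nat d1"] exI[of _ "nat d2"])
      (simp add: algebra_simps)
next
  assume "\<exists>c1 c2 d1 d2 :: nat.
      x = int (c1 * a1 + c2 * a2) \<and> y = int (d1 * a1 + d2 * a2 + b * c2)"
  then obtain c1 c2 d1 d2 :: nat
    where "x = int (c1 * a1 + c2 * a2)" "y = int (d1 * a1 + d2 * a2 + b * c2)"
    by blast
  then have "(x, y) = Radd (Rmult (int a1, 0) (int c1, int d1)) (Rmult (int a2, int b) (int c2, int d2))"
    by (simp add: Radd_def Rmult_def algebra_simps)
  moreover have "(int c1, int d1) \<in> Nsq" "(int c2, int d2) \<in> Nsq" by (auto simp: Nsq_def)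
  ultimately show "(x, y) \<in> MN (int a1, 0) (int a2, int b)" unfolding MN_def by blast
qed

lemma Frob_iff:
  "w \<in> Frob \<alpha>1 \<alpha>2 \<longleftrightarrow> (\<forall>p q. 0 \<le> p \<longrightarrow> 0 \<le> q \<longrightarrow> (fst w + p, snd w + q) \<in> MN \<alpha>1 \<alpha>2)"
  by (auto simp: Frob_def image_subset_iff Nsq_def Radd_def)

lemma image_Radd_Nsq_iff:
  "w \<in> (\<lambda>v. Radd K v) ` Nsq \<longleftrightarrow> fst K \<le> fst w \<and> snd K \<le> snd w"
proof
  assume "fst K \<le> fst w \<and> snd K \<le> snd w"
  then have "(fst w - fst K, snd w - snd K) \<in> Nsq" by (simp add: Nsq_def)
  moreover have "w = Radd K (fst w - fst K, snd w - snd K)" by (simp add: Radd_def)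
  ultimately show "w \<in> (\<lambda>v. Radd K v) ` Nsq" by blast
qed (auto simp: Nsq_def Radd_def)

lemma mem_MN_fst_in_semigroup:
  assumes "(x, y) \<in> MN (int a1, 0) (int a2, int b)"
  shows "0 \<le> x \<and> nat x \<in> generated_semigroup a1 a2"
proof -
  obtain c1 c2 :: nat where "x = int (c1 * a1 + c2 * a2)"
    using assms unfolding mem_MN_iff by blast
  then have "0 \<le> x" and "nat x = c1 * a1 + c2 * a2" by (simp, simp only: nat_int)
  then show ?thesis unfolding generated_semigroup_def by blast
qed

lemma mem_MN_over_forced_fst:
  assumes "a1 > 0" and "coprime a1 a2"
    and "(int (a2 * (a1 - 1) + a1 * u), y) \<in> MN (int a1, 0) (int a2, int b)"
  shows "0 \<le> y - int (b * (a1 - 1)) \<and> nat (y - int (b * (a1 - 1))) \<in> generated_semigroup a1 a2"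
proof -
  obtain c1 c2 d1 d2 :: nat where "c1 * a1 + c2 * a2 = a2 * (a1 - 1) + a1 * u"
    and y: "y = int (d1 * a1 + d2 * a2 + b * c2)"
    using assms(3) unfolding mem_MN_iff by (metis of_nat_eq_iff)
  then obtain j where "c2 = (a1 - 1) + a1 * j"
    using generated_semigroup_forced_coeff assms(1,2) by blast
  with y have "y - int (b * (a1 - 1)) = int ((d1 + b * j) * a1 + d2 * a2)"
    by (simp add: algebra_simps)
  then have "0 \<le> y - int (b * (a1 - 1))"
    and "nat (y - int (b * (a1 - 1))) = (d1 + b * j) * a1 + d2 * a2"
    by (simp, simp only: nat_int)
  then show ?thesis unfolding generated_semigroup_def by blast
qed

lemma mem_MN_if_snd_ge_chi:
  assumes "a1 > 0" and "a2 > 0" and "coprime a1 a2"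
    and "x \<in> generated_semigroup a1 a2" and "chi a1 a2 + b * (a1 - 1) \<le> y"
  shows "(int x, int y) \<in> MN (int a1, 0) (int a2, int b)"
proof -
  obtain c1 c2 where x: "x = c1 * a1 + c2 * a2" and "c2 < a1"
    using generated_semigroup_small_coeff assms(1,4) by blast
  have "b * c2 \<le> b * (a1 - 1)" using \<open>c2 < a1\<close> by (intro mult_le_mono2) simp
  define n where "n = y - chi a1 a2 - b * c2"
  have y: "y = (chi a1 a2 + n) + b * c2"
    using \<open>b * c2 \<le> b * (a1 - 1)\<close> assms(5) unfolding n_def by linarith
  obtain d1 d2 where "chi a1 a2 + n = d1 * a1 + d2 * a2"
    using chi_add_mem[OF assms(1-3)] unfolding generated_semigroup_def by blast
  with y have "y = d1 * a1 + d2 * a2 + b * c2" by simp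
  with x show ?thesis unfolding mem_MN_iff of_nat_eq_iff by blast
qed

lemma Frob_lower_bounds:
  assumes "a1 > 0" and "coprime a1 a2" and "w \<in> Frob (int a1, 0) (int a2, int b)"
  shows "int (chi a1 a2) \<le> fst w \<and> int (chi a1 a2) + int (b * (a1 - 1)) \<le> snd w"
proof -
  obtain u v where w: "w = (u, v)" by fastforce
  have in_MN: "(u + p, v + q) \<in> MN (int a1, 0) (int a2, int b)" if "0 \<le> p" "0 \<le> q" for p q
    using assms(3) that unfolding w Frob_iff by simp
  have "int (chi a1 a2) \<le> u"
    using mem_MN_fst_in_semigroup[OF in_MN[of "int _" 0]] by (intro int_chi_le) simp
  then have "0 \<le> u" by linarith
  define x where "x = a2 * (a1 - 1) + a1 * nat u"
  have "nat u \<le> a1 * nat u" using assms(1) by simp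
  then have "nat u \<le> x" unfolding x_def by linarith
  with \<open>0 \<le> u\<close> have "u \<le> int x" by linarith
  then have "(int x, v + int n) \<in> MN (int a1, 0) (int a2, int b)" for n
    using in_MN[of "int x - u" "int n"] by simp
  from mem_MN_over_forced_fst[OF assms(1,2) this[unfolded x_def]]
  have "int (chi a1 a2) \<le> v - int (b * (a1 - 1))"
    by (intro int_chi_le) (simp only: diff_add_eq)
  with \<open>int (chi a1 a2) \<le> u\<close> show ?thesis unfolding w by simp
qed

lemma mem_Frob_if_ge_bounds:
  assumes "a1 > 0" and "a2 > 0" and "coprime a1 a2"
    and "int (chi a1 a2) \<le> fst w" and "int (chi a1 a2) + int (b * (a1 - 1)) \<le> snd w"
  shows "w \<in> Frob (int a1, 0) (int a2, int b)"
  unfolding Frob_iff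
proof (intro allI impI)
  fix p q :: int
  assume "0 \<le> p" "0 \<le> q"
  define n where "n = nat (fst w + p - int (chi a1 a2))"
  have "fst w + p = int (chi a1 a2 + n)"
    using assms(4) \<open>0 \<le> p\<close> unfolding n_def by simp
  moreover have "snd w + q = int (nat (snd w + q))"
    and "chi a1 a2 + b * (a1 - 1) \<le> nat (snd w + q)"
    using assms(5) \<open>0 \<le> q\<close> of_nat_0_le_iff[of "b * (a1 - 1)"] by linarith+
  ultimately show "(fst w + p, snd w + q) \<in> MN (int a1, 0) (int a2, int b)"
    using mem_MN_if_snd_ge_chi[OF assms(1-3) chi_add_mem[OF assms(1-3)]] by metis
qed

theorem proposition4p5:
  fixes a1 a2 b :: nat
  assumes "a1 > 0" and "a2 > 0" and "coprime a1 a2"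
  shows "Frob (int a1, 0) (int a2, int b)
    = (\<lambda>v. Radd (int (chi a1 a2), int (chi a1 a2) + int b * (int a1 - 1)) v) ` Nsq"
proof (rule set_eqI)
  fix w :: "int \<times> int"
  have B: "int (b * (a1 - 1)) = int b * (int a1 - 1)" using assms(1) by (simp add: of_nat_diff)
  show "w \<in> Frob (int a1, 0) (int a2, int b) \<longleftrightarrow>
      w \<in> (\<lambda>v. Radd (int (chi a1 a2), int (chi a1 a2) + int b * (int a1 - 1)) v) ` Nsq"
    unfolding image_Radd_Nsq_iff fst_conv snd_conv B[symmetric]
    using Frob_lower_bounds[OF assms(1,3)] mem_Frob_if_ge_bounds[OF assms] by blast
qed

end
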